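(* Let $M$ be a $*$-left Ehresmann monoid with basis $H$, and suppose $m\in M$ has $H$-canonical form of length $n$. If $m=h_1\cdots h_n$ with $h_i\in H$ for $1\le i\le n$, then \[m=\big(h_1(h_2\cdots h_n)^+\big)\big(h_2(h_3\cdots h_n)^+\big)\cdots\big(h_{n-1}h_n^+\big)h_n\] is the $H$-canonical form of $m$ (in particular each displayed factor lies in $H$).
   Context: A $*$-left Ehresmann monoid is a monoid $M$ with unary operations $+,*$ such that $x^+x=x$, $(x^+y^+)^+=x^+y^+$, $x^+y^+=y^+x^+$, $(xy)^+=(xy^+)^+$, $xx^*=x$, $(x^* )^*=x^*$, $x^*y^*=y^*x^*$, $(xy^* )^*y^*=(xy^* )^*$, $(x^* )^+=x^*$, $(x^+)^*=x^+$. Projections: $E=\{a^+\}=\{a^*\}$, ordered by $e\le f$ iff $ef=e$; $\sigma$ is the least monoid congruence containing $E\times E$. $H\subseteq M$ is atomic if: (H1) $E\subseteq H$; (H2) $h\in H,e\in E$ imply $he\in H$ and $(he)^*=h^*e$; (H3) if $h\in H$, $k\in H\setminus E$, $h^*\ge k^+$ then $hk\in H$ and $(hk)^*=k^*$; (H4) every $m\in M$ is $\sigma$-related to some $h\in H$; (H5) if $h,k,w\in H$, $hk\,\sigma\,w$ and $k^*=w^*$, then some $u\in H$ has $u\,\sigma\,h$ and $u^*\ge k^+$. An expression $m=h_1\cdots h_n$ ($n\ge1$, $h_i\in H$) is in $H$-canonical form if $h_i^*<h_{i+1}^+$ for $1\le i<n$ and $h_i\notin E$ for $2\le i\le n$.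 $M$ has $H$-canonical forms if every element has exactly one expression in $H$-canonical form. $H$ is a basis of $M$ if $H$ generates $M$ as a semigroup, $H$ is atomic and $M$ has $H$-canonical forms. *)

theory Defs
  imports Main
begin

text \<open>A monoid M is modelled as the whole of a type of class monoid_mult;
  the unary operations + and * are the functions pl and st.\<close>

definition star_left_ehresmann :: "('a::monoid_mult \<Rightarrow> 'a) \<Rightarrow> ('a \<Rightarrow> 'a) \<Rightarrow> bool" where
  "star_left_ehresmann pl st \<longleftrightarrow>
     (\<forall>x. pl x * x = x) \<and>
     (\<forall>x y. pl (pl x * pl y) = pl x * pl y) \<and>
     (\<forall>x y. pl x * pl y = pl y * pl x) \<and>
     (\<forall>x y. pl (x * y) = pl (x * pl y)) \<and>
     (\<forall>x. x * st x = x) \<and>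
     (\<forall>x. st (st x) = st x) \<and>
     (\<forall>x y. st x * st y = st y * st x) \<and>
     (\<forall>x y. st (x * st y) * st y = st (x * st y)) \<and>
     (\<forall>x. pl (st x) = st x) \<and>
     (\<forall>x. st (pl x) = pl x)"

definition projections :: "('a::monoid_mult \<Rightarrow> 'a) \<Rightarrow> 'a set" where
  "projections pl = range pl"

definition proj_le :: "'a::monoid_mult \<Rightarrow> 'a \<Rightarrow> bool" where
  "proj_le e f \<longleftrightarrow> e * f = e"

definition proj_less :: "'a::monoid_mult \<Rightarrow> 'a \<Rightarrow> bool" where
  "proj_less e f \<longleftrightarrow> proj_le e f \<and> e \<noteq> f"

definition monoid_congruence :: "('a::monoid_mult \<times> 'a) set \<Rightarrow> bool" where
  "monoid_congruence R \<longleftrightarrow> equiv UNIV R \<and>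
     (\<forall>a b c. (a, b) \<in> R \<longrightarrow> (c * a, c * b) \<in> R \<and> (a * c, b * c) \<in> R)"

definition sigma :: "('a::monoid_mult \<Rightarrow> 'a) \<Rightarrow> ('a \<times> 'a) set" where
  "sigma pl = \<Inter>{R. monoid_congruence R \<and> projections pl \<times> projections pl \<subseteq> R}"

definition atomic :: "('a::monoid_mult \<Rightarrow> 'a) \<Rightarrow> ('a \<Rightarrow> 'a) \<Rightarrow> 'a set \<Rightarrow> bool" where
  "atomic pl st H \<longleftrightarrow>
     projections pl \<subseteq> H \<and>
     (\<forall>h\<in>H. \<forall>e\<in>projections pl. h * e \<in> H \<and> st (h * e) = st h * e) \<and>
     (\<forall>h\<in>H. \<forall>k\<in>H - projections pl. proj_le (pl k) (st h) \<longrightarrow>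
         h * k \<in> H \<and> st (h * k) = st k) \<and>
     (\<forall>m. \<exists>h\<in>H. (m, h) \<in> sigma pl) \<and>
     (\<forall>h\<in>H. \<forall>k\<in>H. \<forall>w\<in>H. (h * k, w) \<in> sigma pl \<and> st k = st w \<longrightarrow>
         (\<exists>u\<in>H. (u, h) \<in> sigma pl \<and> proj_le (pl k) (st u)))"

definition canonical_expr :: "('a::monoid_mult \<Rightarrow> 'a) \<Rightarrow> ('a \<Rightarrow> 'a) \<Rightarrow> 'a set \<Rightarrow> 'a list \<Rightarrow> bool" where
  "canonical_expr pl st H hs \<longleftrightarrow>
     hs \<noteq> [] \<and> set hs \<subseteq> H \<and>
     (\<forall>i. Suc i < length hs \<longrightarrow> proj_less (st (hs ! i)) (pl (hs ! Suc i))) \<and>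
     (\<forall>i. 1 \<le> i \<and> i < length hs \<longrightarrow> hs ! i \<notin> projections pl)"

definition has_canonical_forms :: "('a::monoid_mult \<Rightarrow> 'a) \<Rightarrow> ('a \<Rightarrow> 'a) \<Rightarrow> 'a set \<Rightarrow> bool" where
  "has_canonical_forms pl st H \<longleftrightarrow>
     (\<forall>m. \<exists>!hs. canonical_expr pl st H hs \<and> prod_list hs = m)"

definition generates_semigroup :: "'a::monoid_mult set \<Rightarrow> bool" where
  "generates_semigroup H \<longleftrightarrow> (\<forall>m. \<exists>hs. hs \<noteq> [] \<and> set hs \<subseteq> H \<and> prod_list hs = m)"

definition is_basis :: "('a::monoid_mult \<Rightarrow> 'a) \<Rightarrow> ('a \<Rightarrow> 'a) \<Rightarrow> 'a set \<Rightarrow> bool" where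
  "is_basis pl st H \<longleftrightarrow> generates_semigroup H \<and> atomic pl st H \<and> has_canonical_forms pl st H"

text \<open>The displayed expression (h_1 (h_2\<cdots>h_n)^+)(h_2 (h_3\<cdots>h_n)^+)\<cdots>(h_{n-1} h_n^+) h_n.\<close>
definition plus_normalize :: "('a::monoid_mult \<Rightarrow> 'a) \<Rightarrow> 'a list \<Rightarrow> 'a list" where
  "plus_normalize pl hs =
     map (\<lambda>i. hs ! i * pl (prod_list (drop (Suc i) hs))) [0..<length hs - 1] @ [last hs]"

end

theory Submission
  imports Defs
begin

text \<open>Build a canonical form of h_1 \<cdots> h_n from the right. Prepending h \<in> H to a canonical
  form k \<cdots> either merges h into the first factor (by (H2) when k is a projection, by (H3) when
  k^+ \<le> h^*) or produces the canonical form (h k^+) k \<cdots>, where k^+ is the + of the whole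
  product k \<cdots>. Hence h_1 \<cdots> h_n has a canonical form that is either shorter than n or is
  exactly the displayed expression, and uniqueness of canonical forms excludes the first case.\<close>

lemma successively_iff_nth:
  "successively P xs \<longleftrightarrow> (\<forall>i. Suc i < length xs \<longrightarrow> P (xs ! i) (xs ! Suc i))"
  by (induction P xs rule: successively.induct) (auto simp: less_Suc_eq_0_disj)

lemma canonical_expr_iff_successively:
  "canonical_expr pl st H hs \<longleftrightarrow>
     hs \<noteq> [] \<and> set hs \<subseteq> H \<and> successively (\<lambda>a b. proj_less (st a) (pl b)) hs \<and>
     set (tl hs) \<inter> projections pl = {}"
proof -
  have "(\<forall>i. 1 \<le> i \<and> i < length hs \<longrightarrow> hs ! i \<notin> projections pl) \<longleftrightarrow>
        set (tl hs) \<inter> projections pl = {}"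
    by (cases hs) (simp_all add: disjoint_iff in_set_conv_nth, auto simp: less_Suc_eq_0_disj)
  then show ?thesis
    unfolding canonical_expr_def successively_iff_nth by blast
qed

lemma canonical_expr_singleton [simp]: "canonical_expr pl st H [k] \<longleftrightarrow> k \<in> H"
  by (simp add: canonical_expr_iff_successively)

lemma canonical_expr_Cons_Cons:
  "canonical_expr pl st H (a # b # rest) \<longleftrightarrow>
     a \<in> H \<and> proj_less (st a) (pl b) \<and> b \<notin> projections pl \<and> canonical_expr pl st H (b # rest)"
  by (auto simp: canonical_expr_iff_successively)

lemma canonical_expr_hd_in: "canonical_expr pl st H (k # rest) \<Longrightarrow> k \<in> H"
  by (simp add: canonical_expr_def)

lemma canonical_expr_replace_hd:
  assumes "canonical_expr pl st H (k # rest)" and "k' \<in> H" and "st k' = st k"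
  shows "canonical_expr pl st H (k' # rest)"
  using assms by (cases rest) (auto simp: canonical_expr_Cons_Cons)

lemma projectionsE:
  assumes "e \<in> projections pl"
  obtains x where "e = pl x"
  using assms unfolding projections_def by blast

lemma plus_normalize_singleton [simp]: "plus_normalize pl [h] = [h]"
  by (simp add: plus_normalize_def)

lemma length_plus_normalize [simp]: "hs \<noteq> [] \<Longrightarrow> length (plus_normalize pl hs) = length hs"
  by (simp add: plus_normalize_def)

lemma plus_normalize_Cons:
  assumes "t \<noteq> []"
  shows "plus_normalize pl (h # t) = h * pl (prod_list t) # plus_normalize pl t"
proof -
  have "[0..<length (h # t) - 1] = 0 # map Suc [0..<length t - 1]"
    using assms by (simp add: upt_conv_Cons map_Suc_upt del: upt_Suc)
  then show ?thesis
    using assms by (simp add: plus_normalize_def comp_def)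
qed

locale star_left_ehresmann_monoid =
  fixes pl st :: "'a::monoid_mult \<Rightarrow> 'a"
  assumes star_left_ehresmann: "star_left_ehresmann pl st"
begin

lemma plus_mult_self [simp]: "pl x * x = x"
  and plus_mult_plus_comm: "pl x * pl y = pl y * pl x"
  and plus_mult_plus_right: "pl (x * y) = pl (x * pl y)"
  and plus_plus_mult_plus: "pl (pl x * pl y) = pl x * pl y"
  and mult_star_self [simp]: "x * st x = x"
  and plus_star [simp]: "pl (st x) = st x"
  and star_plus [simp]: "st (pl x) = pl x"
  using star_left_ehresmann unfolding star_left_ehresmann_def by auto

lemma plus_plus [simp]: "pl (pl x) = pl x"
proof -
  have "pl 1 = 1"
    using plus_mult_self[of 1] by simp
  then show ?thesis
    using plus_plus_mult_plus[of x 1] by simp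
qed

lemma plus_idem [simp]: "pl x * pl x = pl x"
  using plus_mult_self[of "pl x"] by simp

lemma plus_prod_list_canonical_expr:
  "canonical_expr pl st H (k # rest) \<Longrightarrow> pl (prod_list (k # rest)) = pl k"
proof (induction rest arbitrary: k)
  case Nil
  then show ?case by simp
next
  case (Cons b rest)
  then have "proj_less (st k) (pl b)" and tail: "canonical_expr pl st H (b # rest)"
    by (simp_all add: canonical_expr_Cons_Cons)
  then have "k * pl b = k"
    unfolding proj_less_def proj_le_def by (metis mult_star_self mult.assoc)
  then show ?case
    using Cons.IH[OF tail] plus_mult_plus_right[of k "prod_list (b # rest)"] by simp
qed

end

locale atomic_subset = star_left_ehresmann_monoid +
  fixes H
  assumes atomic: "atomic pl st H"
begin

lemma mult_projection_in:
  "h \<in> H \<Longrightarrow> e \<in> projections pl \<Longrightarrow> h * e \<in> H \<and> st (h * e) = st h * e"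
  using atomic unfolding atomic_def by blast

lemma mult_in_if_plus_le_star:
  "h \<in> H \<Longrightarrow> k \<in> H - projections pl \<Longrightarrow> proj_le (pl k) (st h) \<Longrightarrow>
    h * k \<in> H \<and> st (h * k) = st k"
  using atomic unfolding atomic_def by blast

lemma canonical_expr_mult_projection_hd:
  assumes h: "h \<in> H" and k: "k \<in> projections pl" and C: "canonical_expr pl st H (k # rest)"
  shows "canonical_expr pl st H (h * k # rest)"
proof (cases rest)
  case Nil
  then show ?thesis
    using mult_projection_in[OF h k] by simp
next
  case (Cons b r)
  obtain x where kx: "k = pl x"
    using k by (rule projectionsE)
  have hk: "h * k \<in> H" and st_hk: "st (h * k) = st h * k"
    using mult_projection_in[OF h k] by auto
  have "proj_less k (pl b)"
    using C Cons kx by (simp add: canonical_expr_Cons_Cons)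
  then have kb: "k * pl b = k" "k \<noteq> pl b"
    unfolding proj_less_def proj_le_def by auto
  have "st h * k \<noteq> pl b"
  proof
    assume eq: "st h * k = pl b"
    then have "pl b * k = st h * k"
      using kx by (metis mult.assoc plus_idem)
    moreover have "pl b * k = k"
      using kb(1) kx plus_mult_plus_comm by metis
    ultimately show False
      using eq kb(2) by simp
  qed
  then have "proj_less (st (h * k)) (pl b)"
    using st_hk kb(1) unfolding proj_less_def proj_le_def by (simp add: mult.assoc)
  then show ?thesis
    using C Cons hk by (simp add: canonical_expr_Cons_Cons)
qed

lemma canonical_expr_absorb_hd:
  assumes "h \<in> H" and "k \<notin> projections pl" and "proj_le (pl k) (st h)"
    and C: "canonical_expr pl st H (k # rest)"
  shows "canonical_expr pl st H (h * k # rest)"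
  using mult_in_if_plus_le_star[of h k] canonical_expr_replace_hd[OF C] canonical_expr_hd_in[OF C]
    assms by blast

lemma canonical_expr_prepend:
  assumes h: "h \<in> H" and "k \<notin> projections pl" and le: "\<not> proj_le (pl k) (st h)"
    and C: "canonical_expr pl st H (k # rest)"
  shows "canonical_expr pl st H (h * pl k # k # rest)"
proof -
  have "pl k \<in> projections pl"
    by (simp add: projections_def)
  then have hk: "h * pl k \<in> H" and st_hk: "st (h * pl k) = st h * pl k"
    using mult_projection_in[OF h] by auto
  have "st h * pl k \<noteq> pl k"
    using le plus_mult_plus_comm[of k "st h"] unfolding proj_le_def by auto
  then have "proj_less (st (h * pl k)) (pl k)"
    using st_hk unfolding proj_less_def proj_le_def by (simp add: mult.assoc)
  then show ?thesis
    using assms hk by (simp add: canonical_expr_Cons_Cons)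
qed

lemma canonical_expr_mult_left:
  assumes h: "h \<in> H" and C: "canonical_expr pl st H (k # rest)"
  obtains C' where "canonical_expr pl st H C'" and "prod_list C' = h * prod_list (k # rest)"
    and "C' = h * pl k # k # rest \<or> length C' \<le> length (k # rest)"
proof -
  have merge: "prod_list (h * k # rest) = h * prod_list (k # rest)"
    by (simp add: mult.assoc)
  consider "k \<in> projections pl" | "k \<notin> projections pl" "proj_le (pl k) (st h)"
    | "k \<notin> projections pl" "\<not> proj_le (pl k) (st h)"
    by blast
  then show ?thesis
  proof cases
    case 1
    show ?thesis
      using that[OF canonical_expr_mult_projection_hd[OF h 1 C] merge] by simp
  next
    case 2
    show ?thesis
      using that[OF canonical_expr_absorb_hd[OF h 2 C] merge] by simp
  next
    case 3
    have "h * pl k * k = h * k"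
      by (simp add: mult.assoc)
    then have "prod_list (h * pl k # k # rest) = h * prod_list (k # rest)"
      by (simp add: mult.assoc[symmetric])
    then show ?thesis
      using that[OF canonical_expr_prepend[OF h 3 C]] by simp
  qed
qed

lemma canonical_expr_of_product:
  assumes "hs \<noteq> []" and "set hs \<subseteq> H"
  obtains C where "canonical_expr pl st H C" and "prod_list C = prod_list hs"
    and "C = plus_normalize pl hs \<or> length C < length hs"
  using assms
proof (induction hs arbitrary: thesis)
  case Nil
  then show ?case by simp
next
  case (Cons h t)
  show ?case
  proof (cases "t = []")
    case True
    then show ?thesis
      using Cons.prems(1)[of "[h]"] Cons.prems(3) by simp
  next
    case False
    obtain C where C: "canonical_expr pl st H C" "prod_list C = prod_list t"
      and C_cases: "C = plus_normalize pl t \<or> length C < length t"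
      using Cons.IH False Cons.prems(3) by auto
    then obtain k rest where kr: "C = k # rest"
      by (cases C) (auto simp: canonical_expr_def)
    obtain C' where C': "canonical_expr pl st H C'" "prod_list C' = h * prod_list C"
      and C'_cases: "C' = h * pl k # C \<or> length C' \<le> length C"
      using canonical_expr_mult_left[of h k rest] Cons.prems(3) C(1) kr by auto
    have "pl k = pl (prod_list t)"
      using plus_prod_list_canonical_expr C kr by metis
    moreover have "length C \<le> length t"
      using C_cases False by auto
    ultimately have "C' = plus_normalize pl (h # t) \<or> length C' < length (h # t)"
      using C'_cases C_cases plus_normalize_Cons[OF False] kr by auto
    then show ?thesis
      using Cons.prems(1) C' C(2) by simp
  qed
qed

end

theorem mainTheorem10:
  fixes pl st :: "'a::monoid_mult \<Rightarrow> 'a" and H :: "'a set" and m :: 'a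
    and n :: nat and cs hs :: "'a list"
  assumes "star_left_ehresmann pl st"
    and "is_basis pl st H"
    and "canonical_expr pl st H cs" and "prod_list cs = m" and "length cs = n"
    and "length hs = n" and "set hs \<subseteq> H" and "prod_list hs = m"
  shows "canonical_expr pl st H (plus_normalize pl hs) \<and> prod_list (plus_normalize pl hs) = m"
proof -
  have atomic: "atomic pl st H" and unique: "has_canonical_forms pl st H"
    using assms(2) unfolding is_basis_def by auto
  interpret atomic_subset pl st H
    using assms(1) atomic by unfold_locales
  have "hs \<noteq> []"
    using assms(3,5,6) unfolding canonical_expr_def by auto
  then obtain C where C: "canonical_expr pl st H C" "prod_list C = m"
    and C_cases: "C = plus_normalize pl hs \<or> length C < length hs"
    using canonical_expr_of_product assms(7,8) by metis
  have "C = cs"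
    using unique C assms(3,4) unfolding has_canonical_forms_def by metis
  then have "C = plus_normalize pl hs"
    using C_cases assms(5,6) by simp
  then show ?thesis
    using C by simp
qed

end
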